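(* Let $(X,\Delta,\xi_0)$ be a log Fano cone singularity with good $\mathbb T$-action. For any $\mathbb T$-invariant linearly bounded filtration $\mathcal F$ of $R$ and any $a\in\mathbb R_{>0}$, we have $\lambda_{\max}(\xi_0;\mathcal F_{a\xi_0})=\lambda_{\max}(\xi_0;\mathcal F)+a$.
   Context: Work over an algebraically closed field of characteristic $0$. $(X,\Delta,\xi_0)$: klt singularity $x\in(X=\mathrm{Spec}(R),\Delta)$ with a good torus $\mathbb T$-action preserving $\Delta$, weight decomposition $R=\bigoplus_{\alpha\in M}R_\alpha$, $\xi_0\in N_{\mathbb R}=(M^\vee)_{\mathbb R}$ with $\langle\alpha,\xi_0\rangle>0$ for all $\alpha\ne0$ with $R_\alpha\ne0$; $\mathrm{wt}_{\xi_0}(\sum f_\alpha)=\min\{\langle\alpha,\xi_0\rangle:f_\alpha\ne0\}$. Filtrations: decreasing, left-continuous, multiplicative families of ideals $\{\mathcal F^\lambda\}_{\lambda\ge0}$, $\mathcal F^0=R$, $\mathfrak m_x$-primary for $\lambda>0$; linearly bounded if $\mathcal F^{C\lambda}\subseteq\mathfrak m_x^{\lceil\lambda\rceil}$ for some $C$; $\mathbb T$-invariant if $\mathcal F^\lambda=\bigoplus_\alpha(\mathcal F^\lambda\cap R_\alpha)$. Twist: $\mathcal F_\xi^\lambda=\bigoplus_\alpha(\mathcal F^{\lambda-\langle\alpha,\xi\rangle}\cap R_\alpha)$ with $\mathcal F^\mu=R$ for $\mu\le0$. $\lambda_{\max}(\xi_0;\mathcal F)=\sup\{\lambda>0:\mathcal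 F^{\lambda m}\not\subseteq\mathcal F_{\mathrm{wt}_{\xi_0}}^m\text{ for some }m\in\mathbb N\}$, where $\mathcal F_v^\lambda=\{f:v(f)\ge\lambda\}$. *)

theory Defs
  imports Main "HOL-Library.Extended_Real" "HOL-Library.Function_Algebras"
begin

text \<open>The coordinate ring R is a type 'a (an integral domain).  The character lattice
M of the torus T is modelled as 'n \<Rightarrow> int for a finite index type 'n (M = Z^r),
and N_R = Hom(M,R) as 'n \<Rightarrow> real.  The weight decomposition R = \<Oplus> R_alpha is
given by the projection maps pr alpha :: 'a \<Rightarrow> 'a onto the summands.\<close>

definition pair :: "('n::finite \<Rightarrow> int) \<Rightarrow> ('n \<Rightarrow> real) \<Rightarrow> real" where
  "pair \<alpha> \<xi> = (\<Sum>i\<in>UNIV. real_of_int (\<alpha> i) * \<xi> i)"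

definition is_grading :: "(('n::finite \<Rightarrow> int) \<Rightarrow> 'a::comm_ring_1 \<Rightarrow> 'a) \<Rightarrow> bool" where
  "is_grading pr \<longleftrightarrow>
     (\<forall>f. finite {\<alpha>. pr \<alpha> f \<noteq> 0}) \<and>
     (\<forall>f. f = (\<Sum>\<alpha>\<in>{\<alpha>. pr \<alpha> f \<noteq> 0}. pr \<alpha> f)) \<and>
     (\<forall>\<alpha> f g. pr \<alpha> (f + g) = pr \<alpha> f + pr \<alpha> g) \<and>
     (\<forall>\<alpha> \<beta> f. pr \<alpha> (pr \<beta> f) = (if \<alpha> = \<beta> then pr \<beta> f else 0)) \<and>
     (\<forall>\<alpha> \<beta> f g. pr \<alpha> f = f \<and> pr \<beta> g = g \<longrightarrow> pr (\<alpha> + \<beta>) (f * g) = f * g) \<and>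
     pr 0 1 = 1"

inductive_set gen_subring :: "'a::comm_ring_1 set \<Rightarrow> 'a set" for S where
  base: "x \<in> S \<Longrightarrow> x \<in> gen_subring S"
| one: "1 \<in> gen_subring S"
| add: "x \<in> gen_subring S \<Longrightarrow> y \<in> gen_subring S \<Longrightarrow> x + y \<in> gen_subring S"
| neg: "x \<in> gen_subring S \<Longrightarrow> - x \<in> gen_subring S"
| mult: "x \<in> gen_subring S \<Longrightarrow> y \<in> gen_subring S \<Longrightarrow> x * y \<in> gen_subring S"

text \<open>(R, T, xi0) is a cone singularity with good torus action and xi0 in the Reeb cone:
R is a finitely generated algebra over the field R_0 = k by homogeneous elements,
and <alpha, xi0> > 0 for every nonzero weight alpha with R_alpha \<noteq> 0.\<close>
definition good_cone :: "(('n::finite \<Rightarrow> int) \<Rightarrow> 'a::idom \<Rightarrow> 'a) \<Rightarrow> ('n \<Rightarrow> real) \<Rightarrow> bool" where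
  "good_cone pr \<xi>0 \<longleftrightarrow>
     is_grading pr \<and>
     (\<forall>c. pr 0 c = c \<and> c \<noteq> 0 \<longrightarrow> (\<exists>d. c * d = 1)) \<and>
     (\<exists>G. finite G \<and> (\<forall>g\<in>G. \<exists>\<alpha>. pr \<alpha> g = g) \<and>
          gen_subring ({c. pr 0 c = c} \<union> G) = UNIV) \<and>
     (\<forall>\<alpha>. \<alpha> \<noteq> 0 \<and> (\<exists>f. f \<noteq> 0 \<and> pr \<alpha> f = f) \<longrightarrow> pair \<alpha> \<xi>0 > 0)"

definition is_ideal :: "'a::comm_ring_1 set \<Rightarrow> bool" where
  "is_ideal I \<longleftrightarrow> 0 \<in> I \<and> (\<forall>x\<in>I. \<forall>y\<in>I. x + y \<in> I) \<and> (\<forall>r. \<forall>x\<in>I. r * x \<in> I)"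

definition ideal_span :: "'a::comm_ring_1 set \<Rightarrow> 'a set" where
  "ideal_span S = \<Inter>{I. is_ideal I \<and> S \<subseteq> I}"

fun ideal_pow :: "'a::comm_ring_1 set \<Rightarrow> nat \<Rightarrow> 'a set" where
  "ideal_pow I 0 = UNIV"
| "ideal_pow I (Suc k) = ideal_span {x * y | x y. x \<in> I \<and> y \<in> ideal_pow I k}"

definition radical :: "'a::comm_ring_1 set \<Rightarrow> 'a set" where
  "radical I = {f. \<exists>n. f ^ n \<in> I}"

text \<open>The maximal ideal m_x of the vertex x: the sum of all R_alpha with alpha \<noteq> 0.\<close>
definition max_ideal :: "(('n::finite \<Rightarrow> int) \<Rightarrow> 'a::comm_ring_1 \<Rightarrow> 'a) \<Rightarrow> 'a set" where
  "max_ideal pr = {f. pr 0 f = 0}"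

definition m_primary :: "(('n::finite \<Rightarrow> int) \<Rightarrow> 'a::comm_ring_1 \<Rightarrow> 'a) \<Rightarrow> 'a set \<Rightarrow> bool" where
  "m_primary pr I \<longleftrightarrow> is_ideal I \<and> radical I = max_ideal pr"

text \<open>Filtrations: only the values at lambda \<ge> 0 matter.\<close>
definition filtration :: "(('n::finite \<Rightarrow> int) \<Rightarrow> 'a::comm_ring_1 \<Rightarrow> 'a) \<Rightarrow> (real \<Rightarrow> 'a set) \<Rightarrow> bool" where
  "filtration pr F \<longleftrightarrow>
     F 0 = UNIV \<and>
     (\<forall>t\<ge>0. is_ideal (F t)) \<and>
     (\<forall>t s. 0 \<le> t \<and> t \<le> s \<longrightarrow> F s \<subseteq> F t) \<and>
     (\<forall>t>0. F t = (\<Inter>s\<in>{0..<t}. F s)) \<and>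
     (\<forall>t s f g. 0 \<le> t \<and> 0 \<le> s \<and> f \<in> F t \<and> g \<in> F s \<longrightarrow> f * g \<in> F (t + s)) \<and>
     (\<forall>t>0. m_primary pr (F t))"

definition Fext :: "(real \<Rightarrow> 'a set) \<Rightarrow> real \<Rightarrow> 'a set" where
  "Fext F s = (if s \<le> 0 then UNIV else F s)"

definition linearly_bounded :: "(('n::finite \<Rightarrow> int) \<Rightarrow> 'a::comm_ring_1 \<Rightarrow> 'a) \<Rightarrow> (real \<Rightarrow> 'a set) \<Rightarrow> bool" where
  "linearly_bounded pr F \<longleftrightarrow>
     (\<exists>C>0. \<forall>t\<ge>0. F (C * t) \<subseteq> ideal_pow (max_ideal pr) (nat \<lceil>t\<rceil>))"

definition T_invariant :: "(('n::finite \<Rightarrow> int) \<Rightarrow> 'a::comm_ring_1 \<Rightarrow> 'a) \<Rightarrow> (real \<Rightarrow> 'a set) \<Rightarrow> bool" where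
  "T_invariant pr F \<longleftrightarrow> (\<forall>t\<ge>0. F t = {f. \<forall>\<alpha>. pr \<alpha> f \<in> F t})"

definition twist :: "(('n::finite \<Rightarrow> int) \<Rightarrow> 'a::comm_ring_1 \<Rightarrow> 'a) \<Rightarrow> (real \<Rightarrow> 'a set) \<Rightarrow> ('n \<Rightarrow> real) \<Rightarrow> real \<Rightarrow> 'a set" where
  "twist pr F \<xi> t = {f. \<forall>\<alpha>. pr \<alpha> f \<in> Fext F (t - pair \<alpha> \<xi>)}"

text \<open>wt_xi(f) = min of <alpha,xi> over nonzero components (= +infinity for f = 0).\<close>
definition wt :: "(('n::finite \<Rightarrow> int) \<Rightarrow> 'a::comm_ring_1 \<Rightarrow> 'a) \<Rightarrow> ('n \<Rightarrow> real) \<Rightarrow> 'a \<Rightarrow> ereal" where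
  "wt pr \<xi> f = (INF \<alpha>\<in>{\<alpha>. pr \<alpha> f \<noteq> 0}. ereal (pair \<alpha> \<xi>))"

definition Fwt :: "(('n::finite \<Rightarrow> int) \<Rightarrow> 'a::comm_ring_1 \<Rightarrow> 'a) \<Rightarrow> ('n \<Rightarrow> real) \<Rightarrow> real \<Rightarrow> 'a set" where
  "Fwt pr \<xi> t = {f. wt pr \<xi> f \<ge> ereal t}"

definition lambda_max :: "(('n::finite \<Rightarrow> int) \<Rightarrow> 'a::comm_ring_1 \<Rightarrow> 'a) \<Rightarrow> ('n \<Rightarrow> real) \<Rightarrow> (real \<Rightarrow> 'a set) \<Rightarrow> ereal" where
  "lambda_max pr \<xi>0 F =
     (SUP t\<in>{t::real. t > 0 \<and> (\<exists>m::nat. \<not> F (t * real m) \<subseteq> Fwt pr \<xi>0 (real m))}. ereal t)"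

end

theory Submission
  imports Defs
begin

(* Twisting by a xi0 raises the filtration level of a homogeneous element of xi0-weight w
   by a w.  So a homogeneous witness g in F^(t m) of weight w < m yields a witness for the
   twist at slope (t m + a w) / m'; passing to a high power g^k (weight k w, level k t m)
   and taking for m' the least integer above k w drives this slope up to t + a, because
   w > 0 on the maximal ideal.  Conversely a homogeneous witness for the twist at slope t'
   lies in F^(t' m - a w), which is contained in F^((t' - a) m), so t' - a is a slope for F. *)

lemma grading_proj_idem:
  assumes "is_grading pr"
  shows "pr \<alpha> (pr \<alpha> f) = pr \<alpha> f"
  using assms unfolding is_grading_def by simp

lemma grading_proj_homogeneous_other:
  assumes "is_grading pr" "pr \<beta> h = h" "\<delta> \<noteq> \<beta>"
  shows "pr \<delta> h = 0"
  using assms unfolding is_grading_def by metis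

lemma grading_homogeneous_power:
  assumes "is_grading pr" "pr \<alpha> g = g"
  shows "pr (\<lambda>i. int k * \<alpha> i) (g ^ k) = g ^ k"
proof (induction k)
  case 0
  have "(\<lambda>i. int 0 * \<alpha> i) = 0" by auto
  then show ?case using assms(1) unfolding is_grading_def by simp
next
  case (Suc k)
  have "(\<lambda>i. int (Suc k) * \<alpha> i) = \<alpha> + (\<lambda>i. int k * \<alpha> i)"
    by (auto simp: algebra_simps)
  moreover have "pr (\<alpha> + (\<lambda>i. int k * \<alpha> i)) (g * g ^ k) = g * g ^ k"
    using assms Suc unfolding is_grading_def by blast
  ultimately show ?case by simp
qed

lemma pair_zero_left [simp]: "pair 0 \<xi> = 0"
  unfolding pair_def by simp

lemma pair_nat_mult_left: "pair (\<lambda>i. int k * \<alpha> i) \<xi> = real k * pair \<alpha> \<xi>"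
  unfolding pair_def by (simp add: sum_distrib_left algebra_simps)

lemma pair_scale_right: "pair \<alpha> (\<lambda>i. a * \<xi> i) = a * pair \<alpha> \<xi>"
  unfolding pair_def by (simp add: sum_distrib_left algebra_simps)

lemma wt_homogeneous:
  assumes "is_grading pr" "pr \<beta> h = h" "h \<noteq> 0"
  shows "wt pr \<xi> h = ereal (pair \<beta> \<xi>)"
proof -
  have "{\<delta>. pr \<delta> h \<noteq> 0} = {\<beta>}"
    using grading_proj_homogeneous_other[OF assms(1,2)] assms(2,3) by auto
  then show ?thesis unfolding wt_def by simp
qed

lemma not_in_Fwt_component:
  assumes "f \<notin> Fwt pr \<xi> t"
  obtains \<beta> where "pr \<beta> f \<noteq> 0" "pair \<beta> \<xi> < t"
proof -
  have "wt pr \<xi> f < ereal t" using assms unfolding Fwt_def by auto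
  then show ?thesis using that unfolding wt_def INF_less_iff by auto
qed

lemma good_cone_pair_nonneg:
  assumes "good_cone pr \<xi>0" "pr \<alpha> g = g" "g \<noteq> 0"
  shows "pair \<alpha> \<xi>0 \<ge> 0"
  using assms unfolding good_cone_def by (cases "\<alpha> = 0") (auto intro: less_imp_le)

lemma good_cone_pair_pos:
  assumes "good_cone pr \<xi>0" "pr \<alpha> g = g" "g \<noteq> 0" "g \<in> max_ideal pr"
  shows "pair \<alpha> \<xi>0 > 0"
proof -
  have "\<alpha> \<noteq> 0" using assms(2-4) unfolding max_ideal_def by auto
  then show ?thesis using assms(1-3) unfolding good_cone_def by blast
qed

lemma filtration_zero_mem:
  assumes "filtration pr F" "s \<ge> 0"
  shows "0 \<in> F s"
  using assms unfolding filtration_def is_ideal_def by blast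

lemma filtration_antimono:
  assumes "filtration pr F" "0 \<le> t" "t \<le> s"
  shows "F s \<subseteq> F t"
  using assms unfolding filtration_def by blast

lemma filtration_power_mem:
  assumes "filtration pr F" "s \<ge> 0" "g \<in> F s"
  shows "g ^ k \<in> F (real k * s)"
proof (induction k)
  case 0
  then show ?case using assms(1) unfolding filtration_def by simp
next
  case (Suc k)
  have "g * g ^ k \<in> F (s + real k * s)"
    using assms Suc unfolding filtration_def by (meson mult_nonneg_nonneg of_nat_0_le_iff)
  then show ?case by (simp add: algebra_simps)
qed

lemma filtration_subset_max_ideal:
  assumes "filtration pr F" "s > 0"
  shows "F s \<subseteq> max_ideal pr"
proof
  fix g assume "g \<in> F s"
  then have "g \<in> radical (F s)" unfolding radical_def by (metis mem_Collect_eq power_one_right)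
  moreover have "radical (F s) = max_ideal pr"
    using assms unfolding filtration_def m_primary_def by blast
  ultimately show "g \<in> max_ideal pr" by simp
qed

lemma subset_Fext: "F s \<subseteq> Fext F s"
  unfolding Fext_def by simp

lemma twist_homogeneous_iff:
  assumes "is_grading pr" "filtration pr F" "pr \<beta> g = g"
  shows "g \<in> twist pr F \<xi> t \<longleftrightarrow> g \<in> Fext F (t - pair \<beta> \<xi>)"
proof -
  have other: "pr \<delta> g \<in> Fext F s" if "\<delta> \<noteq> \<beta>" for \<delta> s
    using grading_proj_homogeneous_other[OF assms(1,3) that] filtration_zero_mem[OF assms(2)]
    unfolding Fext_def by simp
  have "g \<in> twist pr F \<xi> t \<longleftrightarrow> (\<forall>\<alpha>. pr \<alpha> g \<in> Fext F (t - pair \<alpha> \<xi>))"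
    unfolding twist_def by simp
  also have "\<dots> \<longleftrightarrow> pr \<beta> g \<in> Fext F (t - pair \<beta> \<xi>)"
    using other by (metis (full_types))
  finally show ?thesis using assms(3) by simp
qed

lemma T_invariant_twist:
  assumes "is_grading pr" "filtration pr F"
  shows "T_invariant pr (twist pr F \<xi>)"
  unfolding T_invariant_def
proof (intro allI impI)
  fix t :: real
  have "pr \<alpha> f \<in> twist pr F \<xi> t \<longleftrightarrow> pr \<alpha> f \<in> Fext F (t - pair \<alpha> \<xi>)" for \<alpha> f
    using twist_homogeneous_iff[OF assms grading_proj_idem[OF assms(1)]] .
  then show "twist pr F \<xi> t = {f. \<forall>\<alpha>. pr \<alpha> f \<in> twist pr F \<xi> t}"
    unfolding twist_def by blast
qed

definition lambda_max_set ::
    "(('n::finite \<Rightarrow> int) \<Rightarrow> 'a::comm_ring_1 \<Rightarrow> 'a) \<Rightarrow> ('n \<Rightarrow> real) \<Rightarrow> (real \<Rightarrow> 'a set) \<Rightarrow> real set" where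
  "lambda_max_set pr \<xi>0 F = {t. t > 0 \<and> (\<exists>m::nat. \<not> F (t * real m) \<subseteq> Fwt pr \<xi>0 (real m))}"

lemma lambda_max_eq_SUP: "lambda_max pr \<xi>0 F = (SUP t\<in>lambda_max_set pr \<xi>0 F. ereal t)"
  unfolding lambda_max_def lambda_max_set_def ..

lemma homogeneous_mem_lambda_max_set:
  assumes "is_grading pr" "pr \<beta> g = g" "g \<noteq> 0" "pair \<beta> \<xi>0 < real m"
    and "g \<in> F (t * real m)" "t > 0"
  shows "t \<in> lambda_max_set pr \<xi>0 F"
proof -
  have "g \<notin> Fwt pr \<xi>0 (real m)"
    using wt_homogeneous[OF assms(1-3)] assms(4) unfolding Fwt_def by simp
  then show ?thesis using assms(5,6) unfolding lambda_max_set_def by blast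
qed

lemma lambda_max_set_homogeneous_witness:
  assumes "is_grading pr" "T_invariant pr F" "t \<in> lambda_max_set pr \<xi>0 F"
  obtains m :: nat and \<beta> g where "pr \<beta> g = g" "g \<noteq> 0" "pair \<beta> \<xi>0 < real m"
    "g \<in> F (t * real m)" "t > 0"
proof -
  obtain m :: nat and f where t: "t > 0" and f: "f \<in> F (t * real m)" "f \<notin> Fwt pr \<xi>0 (real m)"
    using assms(3) unfolding lambda_max_set_def by blast
  obtain \<beta> where \<beta>: "pr \<beta> f \<noteq> 0" "pair \<beta> \<xi>0 < real m"
    using not_in_Fwt_component[OF f(2)] .
  have "0 \<le> t * real m" using t by simp
  then have "F (t * real m) = {f. \<forall>\<alpha>. pr \<alpha> f \<in> F (t * real m)}"
    using assms(2) unfolding T_invariant_def by blast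
  then have "pr \<beta> f \<in> F (t * real m)" using f(1) by blast
  then show ?thesis using that grading_proj_idem[OF assms(1)] \<beta> t by blast
qed

lemma lambda_max_set_nonempty:
  fixes pr :: "('n::finite \<Rightarrow> int) \<Rightarrow> 'a::idom \<Rightarrow> 'a"
  assumes "is_grading pr" "filtration pr F" "pr \<beta> g = g" "g \<noteq> 0" "g \<in> max_ideal pr"
  shows "lambda_max_set pr \<xi>0 F \<noteq> {}"
proof -
  have "radical (F 1) = max_ideal pr"
    using assms(2) unfolding filtration_def m_primary_def by auto
  then obtain n where n: "g ^ n \<in> F 1" using assms(5) unfolding radical_def by blast
  define m where "m = nat \<lceil>real n * pair \<beta> \<xi>0\<rceil> + 1"
  have m: "real n * pair \<beta> \<xi>0 < real m" "real m > 0" unfolding m_def by linarith+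
  have "1 / real m \<in> lambda_max_set pr \<xi>0 F"
  proof (rule homogeneous_mem_lambda_max_set[OF assms(1) grading_homogeneous_power[OF assms(1,3)]])
    show "g ^ n \<noteq> 0" using assms(4) by simp
    show "pair (\<lambda>i. int n * \<beta> i) \<xi>0 < real m" using m(1) by (simp add: pair_nat_mult_left)
    show "g ^ n \<in> F (1 / real m * real m)" using n m(2) by simp
  qed (use m(2) in simp)
  then show ?thesis by blast
qed

(* The exponent k makes the slack t k (m - w) absorb t + a, and m' overshoots k w by at most 1. *)
lemma power_slope_exceeds:
  fixes t a w m :: real
  assumes "t > 0" "a \<ge> 0" "0 < w" "w < m"
  obtains k m' :: nat and t' where "real k * w < real m'" "t + a \<le> t'"
    "t' * real m' = real k * (t * m) + a * (real k * w)"
proof -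
  define k where "k = nat \<lceil>(t + a) / (t * (m - w))\<rceil>"
  have "(t + a) / (t * (m - w)) \<le> real k" unfolding k_def by linarith
  then have k: "t + a \<le> real k * t * (m - w)"
    using assms by (simp add: divide_le_eq mult.assoc mult.commute mult.left_commute)
  define m' where "m' = nat \<lfloor>real k * w\<rfloor> + 1"
  have m': "real k * w < real m'" "real m' \<le> real k * w + 1" "real m' > 0"
    unfolding m'_def using assms(3) by (simp_all add: of_nat_nat add_pos_nonneg) linarith+
  define t' where "t' = (real k * (t * m) + a * (real k * w)) / real m'"
  have t': "t' * real m' = real k * (t * m) + a * (real k * w)"
    unfolding t'_def using m'(3) by simp
  have "(t + a) * real m' \<le> (t + a) * (real k * w + 1)"
    using m'(2) assms(1,2) by (intro mult_left_mono) auto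
  also have "\<dots> \<le> t' * real m'" unfolding t' using k by (simp add: algebra_simps)
  finally have "t + a \<le> t'" using m'(3) by simp
  with m'(1) t' that show ?thesis by blast
qed

lemma lambda_max_set_twist_ge:
  assumes "good_cone pr \<xi>0" "filtration pr F" "T_invariant pr F" "a \<ge> 0"
    and "t \<in> lambda_max_set pr \<xi>0 F"
  shows "\<exists>t'\<in>lambda_max_set pr \<xi>0 (twist pr F (\<lambda>i. a * \<xi>0 i)). t + a \<le> t'"
proof -
  have gr: "is_grading pr" using assms(1) unfolding good_cone_def by blast
  obtain m :: nat and \<beta> g where g: "pr \<beta> g = g" "g \<noteq> 0" "pair \<beta> \<xi>0 < real m"
      "g \<in> F (t * real m)" and t: "t > 0"
    using lambda_max_set_homogeneous_witness[OF gr assms(3,5)] .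
  define w where "w = pair \<beta> \<xi>0"
  have "real m > 0" using good_cone_pair_nonneg[OF assms(1) g(1,2)] g(3) by simp
  then have "g \<in> max_ideal pr" using filtration_subset_max_ideal[OF assms(2)] g(4) t
    by (meson mult_pos_pos subsetD)
  then have "0 < w" unfolding w_def using good_cone_pair_pos[OF assms(1) g(1,2)] by blast
  then obtain k m' :: nat and t' where km': "real k * w < real m'" "t + a \<le> t'"
      "t' * real m' = real k * (t * real m) + a * (real k * w)"
    using power_slope_exceeds[OF t assms(4) _ g(3)[folded w_def]] by blast
  let ?h = "g ^ k"
  have h: "pr (\<lambda>i. int k * \<beta> i) ?h = ?h" "?h \<noteq> 0"
    using grading_homogeneous_power[OF gr g(1)] g(2) by auto
  have "?h \<in> F (real k * (t * real m))"
    using filtration_power_mem[OF assms(2) _ g(4)] t by simp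
  then have "?h \<in> Fext F (real k * (t * real m))" by (rule subsetD[OF subset_Fext])
  moreover have "t' * real m' - pair (\<lambda>i. int k * \<beta> i) (\<lambda>i. a * \<xi>0 i) = real k * (t * real m)"
    unfolding pair_scale_right pair_nat_mult_left km'(3) w_def by simp
  ultimately have "?h \<in> Fext F (t' * real m' - pair (\<lambda>i. int k * \<beta> i) (\<lambda>i. a * \<xi>0 i))"
    by simp
  then have "?h \<in> twist pr F (\<lambda>i. a * \<xi>0 i) (t' * real m')"
    by (rule twist_homogeneous_iff[OF gr assms(2) h(1), THEN iffD2])
  then have "t' \<in> lambda_max_set pr \<xi>0 (twist pr F (\<lambda>i. a * \<xi>0 i))"
    using homogeneous_mem_lambda_max_set[OF gr h] km'(1,2) t assms(4)
    by (simp add: pair_nat_mult_left w_def)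
  with km'(2) show ?thesis by blast
qed

lemma lambda_max_set_twist_le:
  assumes "good_cone pr \<xi>0" "filtration pr F" "a \<ge> 0"
    and "t' \<in> lambda_max_set pr \<xi>0 (twist pr F (\<lambda>i. a * \<xi>0 i))"
  shows "\<exists>t\<in>lambda_max_set pr \<xi>0 F. t' \<le> t + a"
proof -
  have gr: "is_grading pr" using assms(1) unfolding good_cone_def by blast
  obtain m :: nat and \<beta> g where g: "pr \<beta> g = g" "g \<noteq> 0" "pair \<beta> \<xi>0 < real m"
      and gG: "g \<in> twist pr F (\<lambda>i. a * \<xi>0 i) (t' * real m)" and t': "t' > 0"
    using lambda_max_set_homogeneous_witness[OF gr T_invariant_twist[OF gr assms(2)] assms(4)] .
  define w where "w = pair \<beta> \<xi>0"
  have m: "real m > 0" using good_cone_pair_nonneg[OF assms(1) g(1,2)] g(3) by simp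
  have gF: "g \<in> Fext F (t' * real m - a * w)"
    using gG twist_homogeneous_iff[OF gr assms(2) g(1)] by (simp add: pair_scale_right w_def)
  have "\<beta> \<noteq> 0"
  proof
    assume "\<beta> = 0"
    then have "g \<in> F (t' * real m)" using gF mult_pos_pos[OF t' m] unfolding w_def Fext_def by simp
    then have "pr 0 g = 0"
      using filtration_subset_max_ideal[OF assms(2) mult_pos_pos[OF t' m]] unfolding max_ideal_def by auto
    with \<open>\<beta> = 0\<close> g(1,2) show False by simp
  qed
  then have "g \<in> max_ideal pr"
    using grading_proj_homogeneous_other[OF gr g(1)] unfolding max_ideal_def by simp
  then obtain t0 where t0: "t0 \<in> lambda_max_set pr \<xi>0 F"
    using lambda_max_set_nonempty[OF gr assms(2) g(1,2)] by blast
  show ?thesis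
  proof (cases "t' \<le> a")
    case True
    with t0 show ?thesis unfolding lambda_max_set_def by force
  next
    case False
    have le: "(t' - a) * real m \<le> t' * real m - a * w"
      using g(3) assms(3) unfolding w_def by (simp add: algebra_simps mult_left_mono)
    have pos: "(t' - a) * real m > 0" using False m by simp
    then have "g \<in> F (t' * real m - a * w)" using gF le unfolding Fext_def by simp
    then have "g \<in> F ((t' - a) * real m)"
      using filtration_antimono[OF assms(2) less_imp_le[OF pos] le] by blast
    then have "t' - a \<in> lambda_max_set pr \<xi>0 F"
      using homogeneous_mem_lambda_max_set[OF gr g] False by simp
    then show ?thesis by force
  qed
qed

lemma SUP_ereal_shift:
  fixes A B :: "real set"
  assumes "\<And>t. t \<in> A \<Longrightarrow> \<exists>t'\<in>B. t + a \<le> t'"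
    and "\<And>t'. t' \<in> B \<Longrightarrow> \<exists>t\<in>A. t' \<le> t + a"
  shows "(SUP t'\<in>B. ereal t') = (SUP t\<in>A. ereal t) + ereal a"
proof (cases "A = {}")
  case True
  then have "B = {}" using assms(2) by blast
  with True show ?thesis by (simp add: bot_ereal_def)
next
  case False
  have "(SUP t'\<in>B. ereal t') = (SUP t\<in>A. ereal t + ereal a)"
  proof (rule antisym)
    show "(SUP t'\<in>B. ereal t') \<le> (SUP t\<in>A. ereal t + ereal a)"
    proof (rule SUP_least)
      fix t' assume "t' \<in> B"
      then obtain t where "t \<in> A" "ereal t' \<le> ereal t + ereal a" using assms(2) by force
      then show "ereal t' \<le> (SUP t\<in>A. ereal t + ereal a)" by (meson SUP_upper2)
    qed
    show "(SUP t\<in>A. ereal t + ereal a) \<le> (SUP t'\<in>B. ereal t')"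
    proof (rule SUP_least)
      fix t assume "t \<in> A"
      then obtain t' where "t' \<in> B" "ereal t + ereal a \<le> ereal t'" using assms(1) by force
      then show "ereal t + ereal a \<le> (SUP t'\<in>B. ereal t')" by (meson SUP_upper2)
    qed
  qed
  also have "\<dots> = (SUP t\<in>A. ereal t) + ereal a"
    using False by (rule SUP_ereal_add_left) simp
  finally show ?thesis .
qed

theorem lemma2p15:
  fixes pr :: "('n::finite \<Rightarrow> int) \<Rightarrow> 'a::idom \<Rightarrow> 'a"
    and \<xi>0 :: "'n \<Rightarrow> real" and F :: "real \<Rightarrow> 'a set" and a :: real
  assumes "good_cone pr \<xi>0"
    and "filtration pr F" and "linearly_bounded pr F" and "T_invariant pr F"
    and "a > 0"
  shows "lambda_max pr \<xi>0 (twist pr F (\<lambda>i. a * \<xi>0 i)) = lambda_max pr \<xi>0 F + ereal a"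
  unfolding lambda_max_eq_SUP
proof (rule SUP_ereal_shift)
  show "\<exists>t'\<in>lambda_max_set pr \<xi>0 (twist pr F (\<lambda>i. a * \<xi>0 i)). t + a \<le> t'"
    if "t \<in> lambda_max_set pr \<xi>0 F" for t
    using lambda_max_set_twist_ge[OF assms(1,2,4) _ that] assms(5) by simp
  show "\<exists>t\<in>lambda_max_set pr \<xi>0 F. t' \<le> t + a"
    if "t' \<in> lambda_max_set pr \<xi>0 (twist pr F (\<lambda>i. a * \<xi>0 i))" for t'
    using lambda_max_set_twist_le[OF assms(1,2) _ that] assms(5) by simp
qed

end
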